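(* Let $X$ be a compact connected metric space with infinitely many points, let $\psi\colon X\to X$ be a minimal homeomorphism, and let $S$ be an infinite set of positive integers. Then for every $\varepsilon>0$ there exist $n\in S$, an $\varepsilon$-dense set $\{x_1,\dots,x_n\}\subset X$ of $n$ distinct points, and a permutation $s$ of $\{1,2,\dots,n\}$ such that $${\rm dist}(x_j,\psi(x_{s(j)}))<\varepsilon,\qquad j=1,2,\dots,n.$$
   Context: A homeomorphism is minimal if $X$ has no closed invariant subsets other than $\emptyset$ and $X$. *)

theory Defs
  imports "HOL-Analysis.Analysis"
begin

definition minimal_homeo :: "('a::topological_space \<Rightarrow> 'a) \<Rightarrow> bool" where
  "minimal_homeo psi \<longleftrightarrow>
     (\<forall>A::'a set. closed A \<and> psi ` A = A \<longrightarrow> A = {} \<or> A = UNIV)"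

end

theory Submission
  imports Defs
begin

text \<open>
  Minimality makes every forward orbit dense: its omega-limit set is a nonempty closed invariant
  set. Hence for \<open>\<delta> > 0\<close> any two points are joined by \<open>\<delta>\<close>-chains (pseudo-orbits).
  Connectedness forces the lengths of the \<open>\<delta>\<close>-chains from a point back to itself to have
  gcd 1: otherwise the residue of chain lengths modulo this gcd would be a locally constant,
  non-constant function. So these lengths contain all large integers, and for some \<open>n \<in> S\<close>
  there is a closed \<open>\<delta>\<close>-chain of length \<open>n\<close> whose first points follow an
  \<open>\<epsilon>/2\<close>-dense orbit segment. Since balls in an infinite connected space are infinite,
  the points of this chain can be moved slightly to \<open>n\<close> distinct points; the cyclic shift
  is then the required permutation, uniform continuity of \<open>\<psi>\<close> controlling the error.
\<close>

section \<open>Omega-limit sets\<close>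

definition omega_limit :: "('a::topological_space \<Rightarrow> 'a) \<Rightarrow> 'a \<Rightarrow> 'a set" where
  "omega_limit f y = (\<Inter>N. closure (range (\<lambda>k. (f ^^ (k + N)) y)))"

lemma closed_omega_limit: "closed (omega_limit f y)"
  unfolding omega_limit_def by auto

lemma omega_limit_nonempty:
  assumes "compact (UNIV :: 'a::topological_space set)"
  shows "omega_limit (f :: 'a \<Rightarrow> 'a) y \<noteq> {}"
proof -
  have "(\<Inter>N\<in>I. closure (range (\<lambda>k. (f ^^ (k + N)) y))) \<noteq> {}" if "finite I" for I
  proof -
    have "(f ^^ (Max (insert 0 I) - N + N)) y \<in> closure (range (\<lambda>k. (f ^^ (k + N)) y))" for N
      by (intro closure_subset[THEN subsetD] rangeI)
    moreover have "Max (insert 0 I) - N + N = Max (insert 0 I)" if "N \<in> I" for N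
      using that \<open>finite I\<close> by simp
    ultimately show ?thesis by (metis (no_types, lifting) INT_I empty_iff)
  qed
  then show ?thesis
    using compact_imp_fip_image[OF assms, of UNIV "\<lambda>N. closure (range (\<lambda>k. (f ^^ (k + N)) y))"]
    unfolding omega_limit_def by simp
qed

lemma omega_limit_forward_invariant:
  assumes "continuous_on UNIV f"
  shows "f ` omega_limit f y \<subseteq> omega_limit f y"
proof -
  have "f ` closure (range (\<lambda>k. (f ^^ (k + N)) y)) \<subseteq> closure (range (\<lambda>k. (f ^^ (k + N)) y))" for N
  proof (rule image_closure_subset)
    have "f ` range (\<lambda>k. (f ^^ (k + N)) y) = range (\<lambda>k. (f ^^ (Suc k + N)) y)"
      by (simp add: image_image)
    also have "\<dots> \<subseteq> range (\<lambda>k. (f ^^ (k + N)) y)"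
      by (auto intro: range_eqI[where x = "Suc _"])
    also have "\<dots> \<subseteq> closure (range (\<lambda>k. (f ^^ (k + N)) y))"
      by (rule closure_subset)
    finally show "f ` range (\<lambda>k. (f ^^ (k + N)) y) \<subseteq> closure (range (\<lambda>k. (f ^^ (k + N)) y))" .
  qed (use continuous_on_subset[OF assms] in auto)
  then show ?thesis unfolding omega_limit_def by blast
qed

lemma omega_limit_backward_invariant:
  assumes "homeomorphism UNIV UNIV f g"
  shows "g ` omega_limit f y \<subseteq> omega_limit f y"
proof -
  have g_f: "g (f x) = x" for x
    using assms by (simp add: homeomorphism_def)
  have "g ` closure (range (\<lambda>k. (f ^^ (k + Suc N)) y)) \<subseteq> closure (range (\<lambda>k. (f ^^ (k + N)) y))" for N
  proof (rule image_closure_subset)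
    have "g ` range (\<lambda>k. (f ^^ (k + Suc N)) y) = range (\<lambda>k. (f ^^ (k + N)) y)"
      by (simp add: image_image g_f)
    then show "g ` range (\<lambda>k. (f ^^ (k + Suc N)) y) \<subseteq> closure (range (\<lambda>k. (f ^^ (k + N)) y))"
      using closure_subset by blast
  qed (use assms in \<open>auto simp: homeomorphism_def intro: continuous_on_subset\<close>)
  then show ?thesis unfolding omega_limit_def by blast
qed

lemma minimal_homeo_omega_limit_eq_UNIV:
  assumes "compact (UNIV :: 'a::topological_space set)"
    and "homeomorphism UNIV UNIV f g" and "minimal_homeo f"
  shows "omega_limit (f :: 'a \<Rightarrow> 'a) y = UNIV"
proof -
  have invariant: "f ` omega_limit f y = omega_limit f y"
  proof
    show "f ` omega_limit f y \<subseteq> omega_limit f y"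
      using assms(2) by (intro omega_limit_forward_invariant) (simp add: homeomorphism_def)
    show "omega_limit f y \<subseteq> f ` omega_limit f y"
    proof
      fix x assume "x \<in> omega_limit f y"
      then have "g x \<in> omega_limit f y"
        using omega_limit_backward_invariant[OF assms(2)] by blast
      moreover have "x = f (g x)"
        using assms(2) by (simp add: homeomorphism_def)
      ultimately show "x \<in> f ` omega_limit f y" by blast
    qed
  qed
  have "omega_limit f y = {} \<or> omega_limit f y = UNIV"
    using assms(3) closed_omega_limit invariant unfolding minimal_homeo_def by blast
  then show ?thesis
    using omega_limit_nonempty[OF assms(1)] by blast
qed

section \<open>Pseudo-orbits\<close>

definition pseudo_orbit :: "('a::metric_space \<Rightarrow> 'a) \<Rightarrow> real \<Rightarrow> nat \<Rightarrow> (nat \<Rightarrow> 'a) \<Rightarrow> bool" where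
  "pseudo_orbit f d k c \<longleftrightarrow> (\<forall>i<k. dist (c (Suc i)) (f (c i)) < d)"

definition chain_connects :: "('a::metric_space \<Rightarrow> 'a) \<Rightarrow> real \<Rightarrow> nat \<Rightarrow> 'a \<Rightarrow> 'a \<Rightarrow> bool" where
  "chain_connects f d k y z \<longleftrightarrow> (\<exists>c. pseudo_orbit f d k c \<and> c 0 = y \<and> c k = z)"

definition chain_append :: "(nat \<Rightarrow> 'a) \<Rightarrow> nat \<Rightarrow> (nat \<Rightarrow> 'a) \<Rightarrow> nat \<Rightarrow> 'a" where
  "chain_append c a c' i = (if i \<le> a then c i else c' (i - a))"

lemma pseudo_orbit_append:
  assumes "pseudo_orbit f d a c" "pseudo_orbit f d b c'" "c a = c' 0"
  shows "pseudo_orbit f d (a + b) (chain_append c a c')"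
  unfolding pseudo_orbit_def
proof (intro allI impI)
  fix i assume "i < a + b"
  show "dist (chain_append c a c' (Suc i)) (f (chain_append c a c' i)) < d"
  proof (cases "i < a")
    case True
    then show ?thesis using assms(1) by (simp add: chain_append_def pseudo_orbit_def)
  next
    case False
    then have "chain_append c a c' i = c' (i - a)" and "Suc i - a = Suc (i - a)"
      using assms(3) by (auto simp: chain_append_def)
    then show ?thesis
      using assms(2) False \<open>i < a + b\<close> by (simp add: chain_append_def pseudo_orbit_def)
  qed
qed

lemma chain_append_0 [simp]: "chain_append c a c' 0 = c 0"
  by (simp add: chain_append_def)

lemma chain_append_end:
  assumes "c a = c' 0"
  shows "chain_append c a c' (a + b) = c' b"
  using assms by (simp add: chain_append_def)

lemma chain_connects_trans:
  assumes "chain_connects f d a x y" "chain_connects f d b y z"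
  shows "chain_connects f d (a + b) x z"
proof -
  obtain c c' where "pseudo_orbit f d a c" "c 0 = x" "c a = y"
    and "pseudo_orbit f d b c'" "c' 0 = y" "c' b = z"
    using assms unfolding chain_connects_def by blast
  then show ?thesis
    unfolding chain_connects_def
    by (intro exI[of _ "chain_append c a c'"]) (simp add: pseudo_orbit_append chain_append_end)
qed

lemma chain_connects_refl: "chain_connects f d 0 y y"
  unfolding chain_connects_def pseudo_orbit_def by auto

lemma pseudo_orbit_funpow:
  assumes "d > 0"
  shows "pseudo_orbit f d k (\<lambda>i. (f ^^ i) y)"
  using assms by (simp add: pseudo_orbit_def)

lemma chain_connects_step:
  assumes "d > 0"
  shows "chain_connects f d 1 y (f y)"
  unfolding chain_connects_def using pseudo_orbit_funpow[OF assms] by fastforce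

lemma pseudo_orbit_update_end:
  assumes "pseudo_orbit f d (Suc k) c" "dist z (f (c k)) < d"
  shows "pseudo_orbit f d (Suc k) (c(Suc k := z))"
  using assms by (auto simp: pseudo_orbit_def less_Suc_eq)

lemma chain_connects_orbit_approx:
  assumes "dist ((f ^^ Suc k) y) z < d"
  shows "chain_connects f d (Suc k) y z"
proof -
  have "d > 0" using assms zero_le_dist by (metis le_less_trans)
  then have "pseudo_orbit f d (Suc k) ((\<lambda>i. (f ^^ i) y)(Suc k := z))"
    using assms by (intro pseudo_orbit_update_end pseudo_orbit_funpow) (simp_all add: dist_commute)
  then show ?thesis
    unfolding chain_connects_def by force
qed

lemma open_chain_connects: "open {z. chain_connects f d (Suc k) y z}"
  unfolding open_dist
proof (intro ballI)
  fix z assume "z \<in> {z. chain_connects f d (Suc k) y z}"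
  then obtain c where c: "pseudo_orbit f d (Suc k) c" "c 0 = y" "c (Suc k) = z"
    unfolding chain_connects_def by blast
  define r where "r = d - dist z (f (c k))"
  have "r > 0" using c(1,3) unfolding r_def pseudo_orbit_def by (metis diff_gt_0_iff_gt lessI)
  moreover have "chain_connects f d (Suc k) y z'" if "dist z' z < r" for z'
  proof -
    have "dist z' (f (c k)) < d"
      using that dist_triangle[of z' "f (c k)" z] by (simp add: r_def)
    then show ?thesis
      using pseudo_orbit_update_end[OF c(1)] c(2) unfolding chain_connects_def by force
  qed
  ultimately show "\<exists>r>0. \<forall>z'. dist z' z < r \<longrightarrow> z' \<in> {z. chain_connects f d (Suc k) y z}"
    by blast
qed

section \<open>Additively closed sets of naturals\<close>

lemma add_closed_mult_mem:
  fixes G :: "nat set"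
  assumes "0 \<in> G" "\<And>a b. a \<in> G \<Longrightarrow> b \<in> G \<Longrightarrow> a + b \<in> G" "a \<in> G"
  shows "k * a \<in> G"
  using assms by (induction k) auto

lemma add_closed_ge_square_mem:
  fixes G :: "nat set"
  assumes zero: "0 \<in> G" and add: "\<And>a b. a \<in> G \<Longrightarrow> b \<in> G \<Longrightarrow> a + b \<in> G"
    and "Q \<in> G" "Suc Q \<in> G" "Q * Q \<le> n"
  shows "n \<in> G"
proof (cases "Q = 0")
  case True
  then show ?thesis
    using add_closed_mult_mem[OF zero add \<open>Suc Q \<in> G\<close>, of n] by simp
next
  case False
  define q r where "q = n div Q" and "r = n mod Q"
  have "r < Q" and "Q \<le> q"
    using False \<open>Q * Q \<le> n\<close> by (auto simp: r_def q_def div_le_mono[of "Q * Q" n Q, simplified])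
  then have "n = (q - r) * Q + r * Suc Q"
    by (simp add: q_def r_def algebra_simps diff_mult_distrib)
  also have "\<dots> \<in> G"
    using assms by (intro add add_closed_mult_mem[OF zero add])
  finally show ?thesis .
qed

lemma add_closed_Gcd_1_consecutive:
  fixes G :: "nat set"
  assumes zero: "0 \<in> G" and add: "\<And>a b. a \<in> G \<Longrightarrow> b \<in> G \<Longrightarrow> a + b \<in> G"
    and "Gcd G = 1"
  obtains Q where "Q \<in> G" "Suc Q \<in> G"
proof -
  define pairs where "pairs = {(P, Q). P \<in> G \<and> Q \<in> G \<and> Q < P}"
  obtain p where "p \<in> G" "p > 0"
    using \<open>Gcd G = 1\<close> Gcd_0_iff[of G] by (metis subsetI insertI1 gr0I zero_neq_one)
  then have "(p, 0) \<in> pairs" using zero by (simp add: pairs_def)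
  then obtain P Q where PQ: "(P, Q) \<in> pairs"
    and least: "\<And>P' Q'. (P', Q') \<in> pairs \<Longrightarrow> P - Q \<le> P' - Q'"
    using ex_has_least_nat[of "\<lambda>x. x \<in> pairs" _ "\<lambda>(P, Q). P - Q"] by fastforce
  txt \<open>A nonzero remainder of \<open>k\<close> modulo the least gap \<open>P - Q\<close> would itself be a
    smaller gap, between \<open>k + q Q\<close> and \<open>q P\<close>.\<close>
  have "P - Q dvd k" if "k \<in> G" for k
  proof -
    define q r where "q = k div (P - Q)" and "r = k mod (P - Q)"
    have "P - Q > 0" using PQ by (simp add: pairs_def)
    then have "r < P - Q" by (simp add: r_def)
    have "k + q * Q = (q * (P - Q) + q * Q) + r"
      using div_mult_mod_eq[of k "P - Q"] by (simp add: q_def r_def algebra_simps)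
    also have "q * (P - Q) + q * Q = q * P"
      using PQ by (simp add: pairs_def flip: add_mult_distrib2)
    finally have "k + q * Q = q * P + r" .
    moreover have "k + q * Q \<in> G" "q * P \<in> G"
      using PQ that by (auto simp: pairs_def intro: add add_closed_mult_mem[OF zero add])
    ultimately have "r > 0 \<Longrightarrow> (k + q * Q, q * P) \<in> pairs"
      by (simp add: pairs_def)
    then have "r = 0"
      using least \<open>r < P - Q\<close> \<open>k + q * Q = q * P + r\<close> by fastforce
    then show ?thesis by (simp add: r_def mod_eq_0_iff_dvd)
  qed
  then have "P - Q dvd 1"
    using \<open>Gcd G = 1\<close> by (metis Gcd_greatest)
  then have "P = Suc Q" using PQ by (simp add: pairs_def)
  then show ?thesis using PQ that by (auto simp: pairs_def)
qed

lemma add_closed_Gcd_1_eventually_mem: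
  fixes G :: "nat set"
  assumes "0 \<in> G" "\<And>a b. a \<in> G \<Longrightarrow> b \<in> G \<Longrightarrow> a + b \<in> G" "Gcd G = 1"
  shows "\<exists>N. \<forall>n\<ge>N. n \<in> G"
  using add_closed_Gcd_1_consecutive[OF assms] add_closed_ge_square_mem[OF assms(1,2)] by metis

section \<open>Chains of every large length in connected spaces\<close>

lemma chain_lengths_dvd_iff:
  assumes loops: "\<And>l. chain_connects f d l x x \<Longrightarrow> g dvd l"
    and "chain_connects f d k x z" "chain_connects f d k' x z" "chain_connects f d m z x"
  shows "g dvd k \<longleftrightarrow> g dvd k'"
proof -
  have "g dvd k + m" "g dvd k' + m"
    using assms(2-4) by (blast intro: loops chain_connects_trans)+
  then show ?thesis by (meson dvd_add_right_iff dvd_add_left_iff)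
qed

lemma chain_connects_Suc:
  assumes "d > 0" and trans: "\<And>y z. \<exists>k. chain_connects f d k y z"
  shows "\<exists>k. chain_connects f d (Suc k) y z"
proof -
  obtain k where "chain_connects f d k (f y) z" using trans by blast
  then have "chain_connects f d (1 + k) y z"
    by (rule chain_connects_trans[OF chain_connects_step[OF \<open>d > 0\<close>]])
  then show ?thesis by auto
qed

text \<open>By \<open>chain_lengths_dvd_iff\<close>, divisibility by \<open>g\<close> of the length of a chain from
  \<open>x\<close> depends only on its endpoint, and it is locally constant in the endpoint by
  \<open>open_chain_connects\<close>; connectedness makes it constant.\<close>

lemma chain_connects_dvd_length:
  fixes f :: "'a::metric_space \<Rightarrow> 'a"
  assumes conn: "connected (UNIV :: 'a set)" and "d > 0"
    and trans: "\<And>y z. \<exists>k. chain_connects f d k y z"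
    and loops: "\<And>l. chain_connects f d l x x \<Longrightarrow> g dvd l"
  shows "\<exists>k. chain_connects f d (Suc k) x z \<and> g dvd Suc k"
proof -
  define V where "V = (\<Union>k\<in>{k. g dvd Suc k}. {z. chain_connects f d (Suc k) x z})"
  define W where "W = (\<Union>k\<in>{k. \<not> g dvd Suc k}. {z. chain_connects f d (Suc k) x z})"
  have "open V" "open W"
    unfolding V_def W_def by (auto intro!: open_UN open_chain_connects)
  moreover have "V \<inter> W \<inter> UNIV = {}"
  proof (safe)
    fix y assume "y \<in> V" "y \<in> W"
    then obtain k k' where k: "chain_connects f d (Suc k) x y" "g dvd Suc k"
      and k': "chain_connects f d (Suc k') x y" "\<not> g dvd Suc k'"
      unfolding V_def W_def by blast
    obtain l where "chain_connects f d l y x" using trans by blast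
    with k k' show "y \<in> {}" using chain_lengths_dvd_iff[OF loops k(1) k'(1)] by blast
  qed
  moreover have "y \<in> V \<union> W" for y
  proof -
    obtain k where "chain_connects f d (Suc k) x y"
      using chain_connects_Suc[OF \<open>d > 0\<close> trans] by blast
    then show ?thesis unfolding V_def W_def by (cases "g dvd Suc k") auto
  qed
  moreover have "x \<in> V"
  proof -
    obtain k where "chain_connects f d (Suc k) x x"
      using chain_connects_Suc[OF \<open>d > 0\<close> trans] by blast
    then show ?thesis using loops unfolding V_def by blast
  qed
  ultimately have "W = {}"
    using connectedD[OF conn \<open>open V\<close> \<open>open W\<close>] by blast
  then have "z \<in> V"
    using \<open>z \<in> V \<union> W\<close> by blast
  then show ?thesis unfolding V_def by blast
qed

lemma loop_lengths_Gcd_eq_1: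
  fixes f :: "'a::metric_space \<Rightarrow> 'a"
  assumes conn: "connected (UNIV :: 'a set)" and "d > 0"
    and trans: "\<And>y z. \<exists>k. chain_connects f d k y z"
  shows "Gcd {k. chain_connects f d k x x} = 1"
proof -
  define g where "g = Gcd {k. chain_connects f d k x x}"
  have loops: "g dvd l" if "chain_connects f d l x x" for l
    using that by (simp add: g_def Gcd_dvd)
  obtain m where loop: "chain_connects f d (Suc m) x x"
    using chain_connects_Suc[OF \<open>d > 0\<close> trans] by blast
  have to_f: "chain_connects f d (Suc (Suc m)) x (f x)"
    using chain_connects_trans[OF loop chain_connects_step[OF \<open>d > 0\<close>]] by simp
  obtain k where k: "chain_connects f d (Suc k) x (f x)" "g dvd Suc k"
    using chain_connects_dvd_length[OF assms loops] by blast
  obtain l where "chain_connects f d l (f x) x"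
    using trans by blast
  then have "g dvd Suc m + 1"
    using chain_lengths_dvd_iff[OF loops k(1) to_f] k(2) by simp
  moreover have "g dvd Suc m"
    using loop by (rule loops)
  ultimately have "g dvd 1"
    using dvd_add_right_iff by blast
  then show ?thesis by (simp add: g_def)
qed

lemma chain_connects_eventually:
  fixes f :: "'a::metric_space \<Rightarrow> 'a"
  assumes "connected (UNIV :: 'a set)" and "d > 0"
    and trans: "\<And>y z. \<exists>k. chain_connects f d k y z"
  shows "\<exists>N. \<forall>n\<ge>N. chain_connects f d n y z"
proof -
  obtain N where N: "\<And>n. n \<ge> N \<Longrightarrow> chain_connects f d n z z"
    using add_closed_Gcd_1_eventually_mem[of "{k. chain_connects f d k z z}"]
      chain_connects_refl chain_connects_trans loop_lengths_Gcd_eq_1[OF assms]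
    by (metis mem_Collect_eq)
  obtain m where m: "chain_connects f d m y z" using trans by blast
  have "chain_connects f d n y z" if "n \<ge> m + N" for n
    using chain_connects_trans[OF m N[of "n - m"]] that by simp
  then show ?thesis by blast
qed

section \<open>Closed pseudo-orbits through distinct points\<close>

lemma connected_infinite_imp_infinite_ball:
  fixes a :: "'a::metric_space"
  assumes "connected (UNIV :: 'a set)" "infinite (UNIV :: 'a set)" "e > 0"
  shows "infinite (ball a e)"
proof -
  have "(UNIV :: 'a set) \<noteq> {x}" for x
    using assms(2) by (metis finite.emptyI finite_insert)
  then have "a islimpt UNIV"
    using connected_imp_perfect[OF assms(1)] by blast
  then show ?thesis
    using assms(3) by (simp add: islimpt_eq_infinite_ball)
qed

lemma injective_approximation:
  fixes c :: "nat \<Rightarrow> 'a::metric_space"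
  assumes "\<And>a :: 'a. infinite (ball a e)"
  shows "\<exists>x. inj_on x {1..n} \<and> (\<forall>i\<in>{1..n}. dist (x i) (c i) < e)"
proof (induction n)
  case (Suc n)
  then obtain x where x: "inj_on x {1..n}" "\<forall>i\<in>{1..n}. dist (x i) (c i) < e"
    by blast
  have "finite (x ` {1..n})" by simp
  moreover have "infinite (ball (c (Suc n)) e)" by (rule assms)
  ultimately have "infinite (ball (c (Suc n)) e - x ` {1..n})"
    by (rule Diff_infinite_finite)
  then obtain p where p: "p \<in> ball (c (Suc n)) e" "p \<notin> x ` {1..n}"
    using infinite_imp_nonempty by blast
  define x' where "x' = x(Suc n := p)"
  have agree: "x' ` {1..n} = x ` {1..n}" "inj_on x' {1..n} \<longleftrightarrow> inj_on x {1..n}"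
    unfolding x'_def by (auto intro!: inj_on_cong)
  have "{1..Suc n} = insert (Suc n) {1..n}" by auto
  then have "inj_on x' {1..Suc n}"
    using x(1) p(2) agree by (simp add: x'_def)
  moreover have "\<forall>i\<in>{1..Suc n}. dist (x' i) (c i) < e"
    using x(2) p(1) \<open>{1..Suc n} = insert (Suc n) {1..n}\<close> by (simp add: x'_def dist_commute)
  ultimately show ?case by blast
qed simp

lemma compact_finite_subcover_nat:
  fixes c :: "nat \<Rightarrow> 'a::metric_space"
  assumes "compact (UNIV :: 'a set)" "\<And>z. \<exists>i\<ge>1. dist (c i) z < e"
  shows "\<exists>M\<ge>1. \<forall>z. \<exists>i\<in>{1..M}. dist (c i) z < e"
proof -
  have cover: "UNIV \<subseteq> (\<Union>i\<in>{1..}. ball (c i) e)"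
  proof
    fix z
    obtain i where "i \<ge> 1" "dist (c i) z < e" using assms(2) by blast
    then show "z \<in> (\<Union>i\<in>{1..}. ball (c i) e)" by auto
  qed
  have "\<And>i. i \<in> {1..} \<Longrightarrow> open (ball (c i) e)" by simp
  then obtain C where C: "C \<subseteq> {1..}" "finite C" "UNIV \<subseteq> (\<Union>i\<in>C. ball (c i) e)"
    using compactE_image[OF assms(1) _ cover] by blast
  obtain k where "C \<subseteq> {..k}"
    using C(2) finite_nat_iff_bounded_le by blast
  then have "C \<subseteq> {1..max 1 k}"
    using C(1) by (auto simp: subset_eq)
  then show ?thesis
    using C(3) by (intro exI[of _ "max 1 k"]) fastforce
qed

definition cyclic_pred :: "nat \<Rightarrow> nat \<Rightarrow> nat" where
  "cyclic_pred n j = (if j = 1 then n else if 2 \<le> j \<and> j \<le> n then j - 1 else j)"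

lemma cyclic_pred_permutes:
  assumes "n \<ge> 1"
  shows "cyclic_pred n permutes {1..n}"
proof (rule bij_imp_permutes)
  show "bij_betw (cyclic_pred n) {1..n} {1..n}"
    by (rule bij_betw_byWitness[where f' = "\<lambda>j. if j = n then 1 else Suc j"])
      (use assms in \<open>auto simp: cyclic_pred_def\<close>)
qed (use assms in \<open>auto simp: cyclic_pred_def\<close>)

lemma closed_pseudo_orbit_approximation:
  assumes "pseudo_orbit f d n c" "c n = c 0"
    and "\<forall>i\<in>{1..n}. dist (x i) (c i) < \<eta>"
    and "\<And>u v. dist u v < \<eta> \<Longrightarrow> dist (f u) (f v) < e"
    and "j \<in> {1..n}"
  shows "dist (x j) (f (x (cyclic_pred n j))) < \<eta> + d + e"
proof -
  have "c (cyclic_pred n j) = c (j - 1)" and "cyclic_pred n j \<in> {1..n}"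
    using assms(2,5) by (auto simp: cyclic_pred_def)
  then have "dist (f (c (j - 1))) (f (x (cyclic_pred n j))) < e"
    using assms(3,4) by (metis dist_commute)
  moreover have "dist (c j) (f (c (j - 1))) < d"
    using assms(1,5) unfolding pseudo_orbit_def by (metis Suc_diff_1 atLeastAtMost_iff diff_less less_le_trans zero_less_one)
  moreover have "dist (x j) (c j) < \<eta>"
    using assms(3,5) by blast
  ultimately show ?thesis
    using dist_triangle[of "x j" "f (x (cyclic_pred n j))" "c j"]
      dist_triangle[of "c j" "f (x (cyclic_pred n j))" "f (c (j - 1))"] by linarith
qed

lemma closed_pseudo_orbit_distinct_approximation:
  fixes c :: "nat \<Rightarrow> 'a::metric_space"
  assumes "\<And>a :: 'a. infinite (ball a \<eta>)"
    and "pseudo_orbit f d n c" "c n = c 0" "M \<le> n"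
    and net: "\<And>z. \<exists>i\<in>{1..M}. dist (c i) z < r"
    and "\<And>u v. dist u v < \<eta> \<Longrightarrow> dist (f u) (f v) < e"
  shows "\<exists>x. inj_on x {1..n} \<and> (\<forall>y. \<exists>i\<in>{1..n}. dist y (x i) < r + \<eta>)
           \<and> (\<forall>j\<in>{1..n}. dist (x j) (f (x (cyclic_pred n j))) < \<eta> + d + e)"
proof -
  obtain x where "inj_on x {1..n}" and x: "\<forall>i\<in>{1..n}. dist (x i) (c i) < \<eta>"
    using injective_approximation[OF assms(1)] by blast
  have "\<exists>i\<in>{1..n}. dist y (x i) < r + \<eta>" for y
  proof -
    obtain i where i: "i \<in> {1..M}" "dist (c i) y < r" using net by blast
    then have "i \<in> {1..n}" using \<open>M \<le> n\<close> by simp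
    then have "dist y (x i) < r + \<eta>"
      using x i(2) dist_triangle[of y "x i" "c i"] by (fastforce simp: dist_commute)
    then show ?thesis using \<open>i \<in> {1..n}\<close> by blast
  qed
  moreover have "\<forall>j\<in>{1..n}. dist (x j) (f (x (cyclic_pred n j))) < \<eta> + d + e"
    using closed_pseudo_orbit_approximation[OF assms(2,3) x assms(6)] by blast
  ultimately show ?thesis
    using \<open>inj_on x {1..n}\<close> by blast
qed

lemma minimal_homeo_orbit_approx:
  fixes f :: "'a::metric_space \<Rightarrow> 'a"
  assumes "compact (UNIV :: 'a set)" "homeomorphism UNIV UNIV f g" "minimal_homeo f" "e > 0"
  shows "\<exists>k\<ge>1. dist ((f ^^ k) y) z < e"
proof -
  have "z \<in> closure (range (\<lambda>k. (f ^^ (k + 1)) y))"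
    using minimal_homeo_omega_limit_eq_UNIV[OF assms(1-3), of y] unfolding omega_limit_def by blast
  then obtain k where "dist ((f ^^ (k + 1)) y) z < e"
    using assms(4) unfolding closure_approachable by auto
  then show ?thesis using le_add2 by blast
qed

lemma minimal_homeo_chain_transitive:
  fixes f :: "'a::metric_space \<Rightarrow> 'a"
  assumes "compact (UNIV :: 'a set)" "homeomorphism UNIV UNIV f g" "minimal_homeo f" "d > 0"
  shows "\<exists>k. chain_connects f d k y z"
proof -
  obtain k where "k \<ge> 1" "dist ((f ^^ k) y) z < d"
    using minimal_homeo_orbit_approx[OF assms] by blast
  then obtain k' where "dist ((f ^^ Suc k') y) z < d"
    by (cases k) auto
  then show ?thesis by (blast intro: chain_connects_orbit_approx)
qed

lemma closed_pseudo_orbit_through_orbit_segment: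
  fixes f :: "'a::metric_space \<Rightarrow> 'a"
  assumes "connected (UNIV :: 'a set)" "d > 0" "\<And>y z. \<exists>k. chain_connects f d k y z"
    and "infinite S"
  shows "\<exists>n\<in>S. n \<ge> M \<and> (\<exists>c. pseudo_orbit f d n c \<and> c n = c 0 \<and> (\<forall>i\<le>M. c i = (f ^^ i) y))"
proof -
  obtain N where N: "\<And>n. n \<ge> N \<Longrightarrow> chain_connects f d n ((f ^^ M) y) y"
    using chain_connects_eventually[OF assms(1-3)] by blast
  obtain n where "n \<in> S" "n \<ge> M + N"
    using assms(4) by (meson infinite_nat_iff_unbounded_le)
  then have "chain_connects f d (n - M) ((f ^^ M) y) y"
    by (intro N) simp
  then obtain c' where c': "pseudo_orbit f d (n - M) c'" "c' 0 = (f ^^ M) y" "c' (n - M) = y"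
    unfolding chain_connects_def by blast
  define c where "c = chain_append (\<lambda>i. (f ^^ i) y) M c'"
  have "pseudo_orbit f d (M + (n - M)) c"
    unfolding c_def using c' assms(2) by (intro pseudo_orbit_append pseudo_orbit_funpow) auto
  moreover have "c (M + (n - M)) = c 0"
  proof -
    have "c (M + (n - M)) = c' (n - M)"
      unfolding c_def by (rule chain_append_end) (simp add: c')
    then show ?thesis using c' by (simp add: c_def)
  qed
  moreover have "\<forall>i\<le>M. c i = (f ^^ i) y"
    by (simp add: c_def chain_append_def)
  ultimately show ?thesis
    using \<open>n \<in> S\<close> \<open>n \<ge> M + N\<close> by (metis le_add1 le_add_diff_inverse le_trans)
qed

theorem lemma4p4:
  fixes psi :: "'a::metric_space \<Rightarrow> 'a" and S :: "nat set" and \<epsilon> :: real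
  assumes "compact (UNIV :: 'a set)"
    and "connected (UNIV :: 'a set)"
    and "infinite (UNIV :: 'a set)"
    and "\<exists>phi. homeomorphism UNIV UNIV psi phi"
    and "minimal_homeo psi"
    and "infinite S" and "\<forall>n\<in>S. n > 0"
    and "\<epsilon> > 0"
  shows "\<exists>n\<in>S. \<exists>x :: nat \<Rightarrow> 'a. inj_on x {1..n}
           \<and> (\<forall>y. \<exists>i\<in>{1..n}. dist y (x i) < \<epsilon>)
           \<and> (\<exists>s. s permutes {1..n} \<and> (\<forall>j\<in>{1..n}. dist (x j) (psi (x (s j))) < \<epsilon>))"
proof -
  obtain phi where hom: "homeomorphism UNIV UNIV psi phi" using assms(4) by blast
  have "\<epsilon> / 2 > 0" "\<epsilon> / 4 > 0" using assms(8) by simp_all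
  obtain \<eta> where "\<eta> > 0" "\<eta> \<le> \<epsilon> / 4"
    and \<eta>_cont: "\<And>u v. dist u v < \<eta> \<Longrightarrow> dist (psi u) (psi v) < \<epsilon> / 4"
  proof -
    have "uniformly_continuous_on UNIV psi"
      using hom assms(1) by (simp add: homeomorphism_def compact_uniformly_continuous)
    then obtain \<eta>0 where "\<eta>0 > 0" "\<And>u v. dist u v < \<eta>0 \<Longrightarrow> dist (psi u) (psi v) < \<epsilon> / 4"
      using \<open>\<epsilon> / 4 > 0\<close> unfolding uniformly_continuous_on_def by blast
    then show ?thesis
      using that[of "min \<eta>0 (\<epsilon> / 4)"] \<open>\<epsilon> / 4 > 0\<close> by simp
  qed
  fix x0 :: 'a
  obtain M where "M \<ge> 1" and M: "\<And>z. \<exists>i\<in>{1..M}. dist ((psi ^^ i) x0) z < \<epsilon> / 2"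
    using compact_finite_subcover_nat[OF assms(1)
        minimal_homeo_orbit_approx[OF assms(1) hom assms(5) \<open>\<epsilon> / 2 > 0\<close>]] by blast
  obtain n c where "n \<in> S" "n \<ge> M" and c: "pseudo_orbit psi (\<epsilon> / 2) n c" "c n = c 0"
    and c_orbit: "\<forall>i\<le>M. c i = (psi ^^ i) x0"
    using closed_pseudo_orbit_through_orbit_segment[OF assms(2) \<open>\<epsilon> / 2 > 0\<close> _ assms(6)]
      minimal_homeo_chain_transitive[OF assms(1) hom assms(5) \<open>\<epsilon> / 2 > 0\<close>] by blast
  have net: "\<exists>i\<in>{1..M}. dist (c i) z < \<epsilon> / 2" for z
    using M[of z] c_orbit by auto
  obtain x where "inj_on x {1..n}" and "\<forall>y. \<exists>i\<in>{1..n}. dist y (x i) < \<epsilon> / 2 + \<eta>"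
    and "\<forall>j\<in>{1..n}. dist (x j) (psi (x (cyclic_pred n j))) < \<eta> + \<epsilon> / 2 + \<epsilon> / 4"
    using closed_pseudo_orbit_distinct_approximation[OF
        connected_infinite_imp_infinite_ball[OF assms(2,3) \<open>\<eta> > 0\<close>] c \<open>n \<ge> M\<close> net \<eta>_cont]
    by blast
  moreover have "\<epsilon> / 2 + \<eta> < \<epsilon>" "\<eta> + \<epsilon> / 2 + \<epsilon> / 4 \<le> \<epsilon>"
    using \<open>\<eta> \<le> \<epsilon> / 4\<close> assms(8) by auto
  moreover have "cyclic_pred n permutes {1..n}"
    using \<open>M \<ge> 1\<close> \<open>n \<ge> M\<close> by (intro cyclic_pred_permutes) simp
  ultimately show ?thesis
    using \<open>n \<in> S\<close> by (meson less_trans less_le_trans)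
qed

end
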